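(* Let $T$ be a standard tableau of shape $Y$ with $n$ boxes. For $i=1,\dots,n$ let $q_i$ be the index of the column of $T$ containing $i$, and let $p_i$ be the number of rows of length $q_i$ in the subtableau $T[1,\dots,i]$ formed by the entries $1,\dots,i$. (a) For all integers $\kappa_1,\dots,\kappa_n$ with $0\le\kappa_i\le p_i-1$, the tableau $(\delta_n)^{\kappa_n}\cdots(\delta_1)^{\kappa_1}(T)$ is well defined (i.e. at each step $\delta_i$ is applied to a tableau in $D_i$). (b) For every row-standard tableau $\tau$ with $\mathrm{st}(\tau)=T$ there exist unique integers $\kappa_1,\dots,\kappa_n$ with $0\le\kappa_i\le p_i-1$ such that $\tau=(\delta_n)^{\kappa_n}\cdots(\delta_1)^{\kappa_1}(T)$; moreover $n_{\mathrm{inv}}(\tau)=\kappa_1+\dots+\kappa_n$. Consequently, for every $m$, the number of row-standard $\tau$ with $\mathrm{st}(\tau)=T$ and $n_{\mathrm{inv}}(\tau)=m$ equals the number of tuples $(\kappa_1,\dots,\kappa_n)$ with $0\le\kappa_i\le p_i-1$ and $\sum_i\kappa_i=m$.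
   Context: A row-standard tableau of shape $Y$ is a bijective numbering of the boxes of $Y$ by $1,\dots,n$ increasing left to right along rows; it is standard if also increasing top to bottom along columns. The standardization $\mathrm{st}(\tau)$ is the standard tableau obtained by rearranging the entries of each column of $\tau$ increasingly from top to bottom. An inversion of $\tau$ is a pair $i<j$ in the same column such that either (i) $i$ or $j$ has no box immediately to its right and $i$ is below $j$, or (ii) $i,j$ have right neighbours $i',j'$ with $i'>j'$; $n_{\mathrm{inv}}(\tau)$ is their number. For $i\in\{1,\dots,n\}$, $D_i$ is the set of row-standard $\tau$ such that: (1) $i$ is not in the first row, and letting $j$ be the entry immediately above $i$: (2) if $i$ has a right neighbour $i'$ then $j<i'$, and if $j$ has a right neighbour $j'$ then $i<j'$; (3) for every $k$ in the same column as $i,j$ with $\min(i,j)<k<\max(i,j)$, exactly one of $(\min(i,j),k)$, $(k,\max(i,j))$ is an inversion. For $\tau\in D_i$, with $i_1<\dots<i_q=i$ the entries of the row of $i$ up to $i$ and $j_1<\dots<j_q=j$ those of the row of $j$ up to $j$, $\delta_i(\tau)$ is obtained by swapping $i_k$ and $j_k$ for all $k\le q$. *)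

theory Defs
  imports Main
begin

type_synonym box = "nat \<times> nat"   (* (row, column), both 0-indexed; row 0 is the top row *)
type_synonym tableau = "box \<Rightarrow> nat"

definition young :: "nat list \<Rightarrow> bool" where
  "young Y \<longleftrightarrow> sorted (rev Y) \<and> 0 \<notin> set Y"

definition boxes :: "nat list \<Rightarrow> box set" where
  "boxes Y = {(r, c). r < length Y \<and> c < Y ! r}"

definition size_sh :: "nat list \<Rightarrow> nat" where
  "size_sh Y = sum_list Y"

definition tableau :: "nat list \<Rightarrow> tableau \<Rightarrow> bool" where
  "tableau Y \<tau> \<longleftrightarrow> bij_betw \<tau> (boxes Y) {1..size_sh Y} \<and> (\<forall>b. b \<notin> boxes Y \<longrightarrow> \<tau> b = 0)"

definition row_standard :: "nat list \<Rightarrow> tableau \<Rightarrow> bool" where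
  "row_standard Y \<tau> \<longleftrightarrow> tableau Y \<tau> \<and>
     (\<forall>r c. (r, c) \<in> boxes Y \<and> (r, Suc c) \<in> boxes Y \<longrightarrow> \<tau> (r, c) < \<tau> (r, Suc c))"

definition standard :: "nat list \<Rightarrow> tableau \<Rightarrow> bool" where
  "standard Y \<tau> \<longleftrightarrow> row_standard Y \<tau> \<and>
     (\<forall>r c. (r, c) \<in> boxes Y \<and> (Suc r, c) \<in> boxes Y \<longrightarrow> \<tau> (r, c) < \<tau> (Suc r, c))"

definition st :: "nat list \<Rightarrow> tableau \<Rightarrow> tableau" where
  "st Y \<tau> = (\<lambda>(r, c). if (r, c) \<in> boxes Y
      then sorted_list_of_set {\<tau> (r', c) | r'. (r', c) \<in> boxes Y} ! r else 0)"

definition pos :: "nat list \<Rightarrow> tableau \<Rightarrow> nat \<Rightarrow> box" where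
  "pos Y \<tau> a = (THE b. b \<in> boxes Y \<and> \<tau> b = a)"

definition right :: "box \<Rightarrow> box" where
  "right b = (fst b, Suc (snd b))"

definition is_inv :: "nat list \<Rightarrow> tableau \<Rightarrow> box \<Rightarrow> box \<Rightarrow> bool" where
  "is_inv Y \<tau> b1 b2 \<longleftrightarrow> b1 \<in> boxes Y \<and> b2 \<in> boxes Y \<and> snd b1 = snd b2 \<and> \<tau> b1 < \<tau> b2 \<and>
     (((right b1 \<notin> boxes Y \<or> right b2 \<notin> boxes Y) \<and> fst b1 > fst b2) \<or>
      (right b1 \<in> boxes Y \<and> right b2 \<in> boxes Y \<and> \<tau> (right b1) > \<tau> (right b2)))"

definition n_inv :: "nat list \<Rightarrow> tableau \<Rightarrow> nat" where
  "n_inv Y \<tau> = card {(b1, b2). is_inv Y \<tau> b1 b2}"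

definition D :: "nat list \<Rightarrow> nat \<Rightarrow> tableau set" where
  "D Y i = {\<tau>. row_standard Y \<tau> \<and>
     (let (r, c) = pos Y \<tau> i in
        0 < r \<and>
        (let a = (r, c); b = (r - 1, c); j = \<tau> b in
          (right a \<in> boxes Y \<longrightarrow> j < \<tau> (right a)) \<and>
          (right b \<in> boxes Y \<longrightarrow> i < \<tau> (right b)) \<and>
          (let lo = (if i < j then a else b); hi = (if i < j then b else a) in
            \<forall>k \<in> boxes Y. snd k = c \<and> \<tau> lo < \<tau> k \<and> \<tau> k < \<tau> hi \<longrightarrow>
              (is_inv Y \<tau> lo k \<noteq> is_inv Y \<tau> k hi))))}"

definition delta :: "nat list \<Rightarrow> nat \<Rightarrow> tableau \<Rightarrow> tableau" where
  "delta Y i \<tau> = (let (r, c) = pos Y \<tau> i in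
     (\<lambda>(x, y). if y \<le> c \<and> x = r then \<tau> (r - 1, y)
               else if y \<le> c \<and> x = r - 1 then \<tau> (r, y)
               else \<tau> (x, y)))"

(* (delta_m)^(ks!(m-1)) ... (delta_1)^(ks!0) applied to T *)
fun seq_app :: "nat list \<Rightarrow> nat list \<Rightarrow> nat \<Rightarrow> tableau \<Rightarrow> tableau" where
  "seq_app Y ks 0 T = T"
| "seq_app Y ks (Suc m) T = (delta Y (Suc m) ^^ (ks ! m)) (seq_app Y ks m T)"

definition well_defined :: "nat list \<Rightarrow> nat list \<Rightarrow> tableau \<Rightarrow> bool" where
  "well_defined Y ks T \<longleftrightarrow> (\<forall>i \<in> {1..size_sh Y}. \<forall>t < ks ! (i - 1).
      (delta Y i ^^ t) (seq_app Y ks (i - 1) T) \<in> D Y i)"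

definition qcol :: "nat list \<Rightarrow> tableau \<Rightarrow> nat \<Rightarrow> nat" where
  "qcol Y T i = snd (pos Y T i) + 1"

definition prow :: "nat list \<Rightarrow> tableau \<Rightarrow> nat \<Rightarrow> nat" where
  "prow Y T i = card {r. r < length Y \<and>
      card {c. (r, c) \<in> boxes Y \<and> T (r, c) \<le> i} = qcol Y T i}"

definition admissible :: "nat list \<Rightarrow> tableau \<Rightarrow> nat list \<Rightarrow> bool" where
  "admissible Y T ks \<longleftrightarrow> length ks = size_sh Y \<and>
     (\<forall>i \<in> {1..size_sh Y}. ks ! (i - 1) \<le> prow Y T i - 1)"

end

theory Submission
  imports Defs
begin

(* For 0 <= m <= n let the partial fibre F_m consist of the row-standard tableaux with
   the same column contents as T that agree with T on every box whose T-entry exceeds m.  Then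
   F_0 = {T}, F_n is the whole fibre st^-1(T), and the entries <= m occupy the same boxes in
   every member of F_m.  In a tableau of F_m the entry m lies in column q_m - 1, in one of the
   p_m consecutive rows whose part <= m in T ends exactly at that column.  Applying delta_m to
   such a tableau swaps the initial segments (up to column q_m - 1) of the row of m and of the
   row above; as long as both rows are among these p_m rows this stays inside F_m, the tableau
   lies in D_m, and the number of inversions grows by exactly one.  Hence F_m is the disjoint
   union of the orbits delta_m^t(F_(m-1)), 0 <= t < p_m, and induction on m yields a bijection
   between admissible sequences and the fibre, under which n_inv becomes the sum. *)


lemma young_mono: "young Y \<Longrightarrow> i \<le> j \<Longrightarrow> j < length Y \<Longrightarrow> Y ! j \<le> Y ! i"
  unfolding young_def by (simp add: sorted_rev_nth_mono)

lemma in_boxes: "(r, c) \<in> boxes Y \<longleftrightarrow> r < length Y \<and> c < Y ! r"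
  by (simp add: boxes_def)

lemma boxes_down:
  "young Y \<Longrightarrow> (r, c) \<in> boxes Y \<Longrightarrow> r' \<le> r \<Longrightarrow> c' \<le> c \<Longrightarrow> (r', c') \<in> boxes Y"
  unfolding in_boxes using young_mono[of Y r' r] by fastforce

lemma finite_boxes: "finite (boxes Y)"
proof -
  have "boxes Y \<subseteq> (\<Union>r<length Y. {r} \<times> {..<Y ! r})"
    by (auto simp: boxes_def)
  then show ?thesis by (rule finite_subset) auto
qed

lemma tableau_inj: "tableau Y s \<Longrightarrow> inj_on s (boxes Y)"
  by (simp add: tableau_def bij_betw_def)

lemma tableau_image: "tableau Y s \<Longrightarrow> s ` boxes Y = {1..size_sh Y}"
  by (simp add: tableau_def bij_betw_def)

lemma tableau_range: "tableau Y s \<Longrightarrow> b \<in> boxes Y \<Longrightarrow> 1 \<le> s b \<and> s b \<le> size_sh Y"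
  using tableau_image by fastforce

lemma tableau_outside: "tableau Y s \<Longrightarrow> b \<notin> boxes Y \<Longrightarrow> s b = 0"
  by (cases b) (simp add: tableau_def)

lemma tableau_eq_iff:
  "tableau Y s \<Longrightarrow> b \<in> boxes Y \<Longrightarrow> b' \<in> boxes Y \<Longrightarrow> s b = s b' \<longleftrightarrow> b = b'"
  using tableau_inj inj_on_eq_iff by metis

lemma tableau_surj: "tableau Y s \<Longrightarrow> 1 \<le> a \<Longrightarrow> a \<le> size_sh Y \<Longrightarrow> \<exists>b\<in>boxes Y. s b = a"
  using tableau_image by (metis atLeastAtMost_iff imageE)

lemma pos_eq: "tableau Y s \<Longrightarrow> b \<in> boxes Y \<Longrightarrow> s b = a \<Longrightarrow> pos Y s a = b"
  unfolding pos_def by (rule the_equality) (auto simp: tableau_eq_iff)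

lemma pos_in:
  "tableau Y s \<Longrightarrow> 1 \<le> a \<Longrightarrow> a \<le> size_sh Y \<Longrightarrow> pos Y s a \<in> boxes Y \<and> s (pos Y s a) = a"
  using tableau_surj pos_eq by metis

lemma row_standard_tableau: "row_standard Y s \<Longrightarrow> tableau Y s"
  by (simp add: row_standard_def)

lemma standard_row_standard: "standard Y s \<Longrightarrow> row_standard Y s"
  by (simp add: standard_def)

lemma row_standard_lt:
  assumes "row_standard Y s" "(r, c') \<in> boxes Y" "c < c'"
  shows "s (r, c) < s (r, c')"
  using assms(2,3)
proof (induction c' rule: less_induct)
  case (less x)
  then obtain y where x: "x = Suc y" by (cases x) auto
  have b: "(r, y) \<in> boxes Y" using less.prems by (auto simp: in_boxes x)
  have "s (r, y) < s (r, x)" using assms(1) b less.prems unfolding row_standard_def x by blast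
  then show ?case using less.IH[of y] b less.prems x by (cases "c = y") auto
qed

lemma standard_col_lt:
  assumes "young Y" "standard Y s" "(r', c) \<in> boxes Y" "r < r'"
  shows "s (r, c) < s (r', c)"
  using assms(3,4)
proof (induction r' rule: less_induct)
  case (less x)
  then obtain y where x: "x = Suc y" by (cases x) auto
  have b: "(y, c) \<in> boxes Y" using less.prems boxes_down[OF assms(1)] x by (metis le_refl lessI less_imp_le)
  have "s (y, c) < s (x, c)" using assms(2) b less.prems unfolding standard_def x by blast
  then show ?case using less.IH[of y] b less.prems x by (cases "r = y") auto
qed

lemma downclosed_eq_lessThan:
  assumes "finite (S :: nat set)" "\<And>x y. x \<in> S \<Longrightarrow> y \<le> x \<Longrightarrow> y \<in> S"
  shows "S = {..<card S}"
proof (cases "S = {}")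
  case False
  have "S = {..<Suc (Max S)}"
    using assms False by (auto simp: less_Suc_eq_le) (metis Max_in empty_iff assms)
  then show ?thesis by (metis card_lessThan)
qed simp

lemma bij_betw_restrict_pred:
  assumes "bij_betw f A B"
  shows "bij_betw f {a \<in> A. P (f a)} {b \<in> B. P b}"
proof (rule bij_betw_imageI)
  show "inj_on f {a \<in> A. P (f a)}"
    using bij_betw_imp_inj_on[OF assms] by (rule inj_on_subset) auto
  show "f ` {a \<in> A. P (f a)} = {b \<in> B. P b}"
    using bij_betw_imp_surj_on[OF assms] by blast
qed


definition col :: "nat list \<Rightarrow> nat \<Rightarrow> box set" where
  "col Y c = {b \<in> boxes Y. snd b = c}"

text \<open>The set of entries of column \<open>c\<close>; standardization only depends on these sets.\<close>
definition colset :: "nat list \<Rightarrow> tableau \<Rightarrow> nat \<Rightarrow> nat set" where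
  "colset Y s c = s ` col Y c"

lemma finite_col: "finite (col Y c)"
  using finite_boxes by (simp add: col_def)

lemma colset_alt: "{s (r', c) |r'. (r', c) \<in> boxes Y} = colset Y s c"
  unfolding colset_def col_def by force


section \<open>The box permutation realising \<open>delta\<close>\<close>

definition sw :: "nat \<Rightarrow> nat \<Rightarrow> box \<Rightarrow> box" where
  "sw r c = (\<lambda>(x, y). if y \<le> c \<and> x = r then (r - 1, y)
               else if y \<le> c \<and> x = r - 1 then (r, y) else (x, y))"

lemma sw_invol [simp]: "sw r c (sw r c b) = b"
  by (cases b) (auto simp: sw_def)

lemma sw_col [simp]: "snd (sw r c b) = snd b"
  by (cases b) (auto simp: sw_def)

lemma sw_out: "snd b > c \<or> (fst b \<noteq> r \<and> fst b \<noteq> r - 1) \<Longrightarrow> sw r c b = b"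
  by (cases b) (auto simp: sw_def)

lemma sw_boxes:
  assumes "young Y" "(r, c) \<in> boxes Y" "b \<in> boxes Y"
  shows "sw r c b \<in> boxes Y"
  using assms boxes_down[OF assms(1,2)] by (cases b) (auto simp: sw_def)

lemma sw_notin:
  assumes "young Y" "(r, c) \<in> boxes Y" "b \<notin> boxes Y"
  shows "sw r c b = b"
  using assms boxes_down[OF assms(1,2)] by (cases b) (auto simp: sw_def)

lemma sw_right: "snd b < c \<Longrightarrow> sw r c (right b) = right (sw r c b)"
  by (cases b) (auto simp: sw_def right_def)

text \<open>Being an involution, \<open>sw r c\<close> permutes every set it maps into itself.\<close>
lemma bij_sw_on: "(\<And>b. b \<in> S \<Longrightarrow> sw r c b \<in> S) \<Longrightarrow> bij_betw (sw r c) S S"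
  by (intro bij_betw_byWitness[where f'="sw r c"]) auto

lemma bij_sw: "young Y \<Longrightarrow> (r, c) \<in> boxes Y \<Longrightarrow> bij_betw (sw r c) (boxes Y) (boxes Y)"
  by (rule bij_sw_on) (rule sw_boxes)

lemma comp_sw_cancel:
  assumes "f \<circ> sw r c = g \<circ> sw r c"
  shows "f = g"
proof
  fix b
  have "f (sw r c (sw r c b)) = g (sw r c (sw r c b))" using assms by (metis comp_apply)
  then show "f b = g b" by simp
qed

lemma tableau_sw:
  assumes "young Y" "(r, c) \<in> boxes Y" "tableau Y s"
  shows "tableau Y (s \<circ> sw r c)"
  unfolding tableau_def
  using bij_betw_trans[OF bij_sw[OF assms(1,2)]] assms(3) sw_notin[OF assms(1,2)] tableau_outside[OF assms(3)]
  by (auto simp: tableau_def)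

lemma colset_sw:
  assumes "young Y" "(r, c) \<in> boxes Y"
  shows "colset Y (s \<circ> sw r c) c' = colset Y s c'"
proof -
  have "sw r c ` col Y c' = col Y c'"
    using bij_sw_on[of "col Y c'" r c] sw_boxes[OF assms] by (simp add: bij_betw_def col_def)
  then show ?thesis unfolding colset_def by (metis image_comp)
qed

lemma delta_sw: "pos Y s i = (r, c) \<Longrightarrow> delta Y i s = s \<circ> sw r c"
  unfolding delta_def sw_def by (rule ext) auto


section \<open>Inversions and swaps\<close>

text \<open>The inversion condition for two boxes of one column, in terms of their entries \<open>v\<close>, rows
  \<open>x\<close>, existence \<open>e\<close> and value \<open>R\<close> of right neighbours.\<close>
definition col_inv :: "nat \<Rightarrow> nat \<Rightarrow> bool \<Rightarrow> nat \<Rightarrow> nat \<Rightarrow> nat \<Rightarrow> bool \<Rightarrow> nat \<Rightarrow> bool" where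
  "col_inv v1 x1 e1 R1 v2 x2 e2 R2 \<longleftrightarrow>
     v1 < v2 \<and> ((\<not> e1 \<or> \<not> e2) \<and> x2 < x1 \<or> e1 \<and> e2 \<and> R2 < R1)"

lemma is_inv_col_inv:
  "(x1, c) \<in> boxes Y \<Longrightarrow> (x2, c) \<in> boxes Y \<Longrightarrow> is_inv Y s (x1, c) (x2, c) \<longleftrightarrow>
   col_inv (s (x1, c)) x1 ((x1, Suc c) \<in> boxes Y) (s (x1, Suc c))
           (s (x2, c)) x2 ((x2, Suc c) \<in> boxes Y) (s (x2, Suc c))"
  by (auto simp: is_inv_def col_inv_def right_def)

lemma n_inv_sum: "n_inv Y s = (\<Sum>p\<in>boxes Y \<times> boxes Y. of_bool (is_inv Y s (fst p) (snd p)))"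
proof -
  have "boxes Y \<times> boxes Y \<inter> {p. is_inv Y s (fst p) (snd p)} = {(b1, b2). is_inv Y s b1 b2}"
    by (auto simp: is_inv_def)
  then show ?thesis using finite_boxes by (simp add: n_inv_def)
qed

definition col_invs :: "nat list \<Rightarrow> tableau \<Rightarrow> nat \<Rightarrow> nat" where
  "col_invs Y s c = (\<Sum>p\<in>col Y c \<times> col Y c. of_bool (is_inv Y s (fst p) (snd p)))"

text \<open>Away from column \<open>c\<close> (where the entries are exchanged together with their right
  neighbours), a swap transports inversions to inversions.\<close>
lemma is_inv_sw_outside:
  assumes y: "young Y" and rc: "(r, c) \<in> boxes Y" and r1: "1 \<le> r"
    and nc: "\<not> (snd b1 = c \<and> snd b2 = c)"
  shows "is_inv Y (s \<circ> sw r c) (sw r c b1) (sw r c b2) = is_inv Y s b1 b2"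
proof (cases "snd b1 = snd b2")
  case False then show ?thesis by (simp add: is_inv_def)
next
  case True
  obtain x1 y1 x2 y2 where b: "b1 = (x1, y1)" "b2 = (x2, y2)" by (cases b1, cases b2)
  have mem: "sw r c b \<in> boxes Y \<longleftrightarrow> b \<in> boxes Y" for b
    using sw_boxes[OF y rc, of b] sw_boxes[OF y rc, of "sw r c b"] by auto
  show ?thesis
  proof (cases "c < snd b1")
    case True
    then have "sw r c b1 = b1" "sw r c b2 = b2"
      "sw r c (right b1) = right b1" "sw r c (right b2) = right b2"
      using \<open>snd b1 = snd b2\<close> by (auto intro!: sw_out simp: right_def)
    then show ?thesis by (simp add: is_inv_def)
  next
    case False
    then have lt: "snd b1 < c" "snd b2 < c" using nc \<open>snd b1 = snd b2\<close> by auto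
    have R: "right (sw r c b) = sw r c (right b)" if "snd b < c" for b
      using sw_right[OF that] by simp
    have rows: "(right b1 \<notin> boxes Y \<or> right b2 \<notin> boxes Y) \<longrightarrow>
        (fst (sw r c b1) > fst (sw r c b2) \<longleftrightarrow> fst b1 > fst b2)"
    proof
      assume h: "right b1 \<notin> boxes Y \<or> right b2 \<notin> boxes Y"
      have "(x, Suc y) \<in> boxes Y" if "x = r \<or> x = r - 1" "y < c" for x y
        using boxes_down[OF y rc, of x "Suc y"] that by auto
      then have "\<not> ((x1 = r \<or> x1 = r - 1) \<and> (x2 = r \<or> x2 = r - 1))"
        using h lt b by (auto simp: right_def)
      then show "fst (sw r c b1) > fst (sw r c b2) \<longleftrightarrow> fst b1 > fst b2"
        using lt b r1 by (auto simp: sw_def)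
    qed
    show ?thesis unfolding is_inv_def using R[OF lt(1)] R[OF lt(2)] rows mem by auto
  qed
qed

text \<open>Consequently a swap changes the total number of inversions exactly as it changes the
  number of inversions inside column \<open>c\<close>.\<close>
lemma n_inv_sw_balance:
  assumes y: "young Y" and rc: "(r, c) \<in> boxes Y" and r1: "1 \<le> r"
  shows "n_inv Y (s \<circ> sw r c) + col_invs Y s c = n_inv Y s + col_invs Y (s \<circ> sw r c) c"
proof -
  define f where "f t p = (of_bool (is_inv Y t (fst p) (snd p)) :: nat)" for t p
  define Out where "Out = boxes Y \<times> boxes Y - col Y c \<times> col Y c"
  define ph where "ph = map_prod (sw r c) (sw r c)"
  have split: "n_inv Y t = sum (f t) Out + col_invs Y t c" for t
    unfolding n_inv_sum col_invs_def f_def[symmetric] Out_def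
    by (rule sum.subset_diff) (auto simp: col_def finite_boxes)
  have "bij_betw ph Out Out"
    unfolding ph_def Out_def
    by (rule bij_betw_byWitness[where f'=ph])
       (auto simp: ph_def col_def sw_boxes[OF y rc])
  then have "sum (f (s \<circ> sw r c)) Out = sum (f (s \<circ> sw r c) \<circ> ph) Out"
    by (simp add: sum.reindex_bij_betw)
  also have "\<dots> = sum (f s) Out"
  proof (rule sum.cong[OF refl])
    fix p assume "p \<in> Out"
    then have "\<not> (snd (fst p) = c \<and> snd (snd p) = c)" by (auto simp: Out_def col_def)
    then show "(f (s \<circ> sw r c) \<circ> ph) p = f s p"
      using is_inv_sw_outside[OF y rc r1, of "fst p" "snd p" s]
      by (simp add: f_def ph_def map_prod_def case_prod_beta)
  qed
  finally show ?thesis using split[of s] split[of "s \<circ> sw r c"] by simp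
qed

lemma sum_square_split:
  fixes f :: "'a \<Rightarrow> 'a \<Rightarrow> nat"
  assumes "finite W" "x1 \<notin> W" "x2 \<notin> W" "x1 \<noteq> x2"
  shows "(\<Sum>p\<in>insert x1 (insert x2 W) \<times> insert x1 (insert x2 W). f (fst p) (snd p)) =
     f x1 x1 + f x1 x2 + f x2 x1 + f x2 x2 + (\<Sum>w\<in>W. f x1 w + f x2 w + f w x1 + f w x2)
     + (\<Sum>p\<in>W \<times> W. f (fst p) (snd p))"
proof -
  have e: "\<And>A. (\<Sum>p\<in>A \<times> A. f (fst p) (snd p)) = (\<Sum>a\<in>A. \<Sum>b\<in>A. f a b)"
    by (simp add: sum.cartesian_product case_prod_beta)
  show ?thesis unfolding e using assms by (simp add: sum.distrib algebra_simps)
qed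

lemma col_invs_split:
  assumes "b1 \<in> col Y c" "b2 \<in> col Y c" "b1 \<noteq> b2"
  defines "W \<equiv> col Y c - {b1, b2}"
  shows "col_invs Y t c = of_bool (is_inv Y t b1 b2) + of_bool (is_inv Y t b2 b1)
     + (\<Sum>w\<in>W. of_bool (is_inv Y t b1 w) + of_bool (is_inv Y t b2 w)
                + of_bool (is_inv Y t w b1) + of_bool (is_inv Y t w b2))
     + (\<Sum>p\<in>W \<times> W. of_bool (is_inv Y t (fst p) (snd p)))"
proof -
  have C: "col Y c = insert b1 (insert b2 W)" unfolding W_def using assms(1-3) by auto
  have "finite W" using finite_col by (simp add: W_def)
  moreover have "b1 \<notin> W" "b2 \<notin> W" by (simp_all add: W_def)
  moreover have "\<not> is_inv Y t b b" for b by (simp add: is_inv_def)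
  ultimately show ?thesis
    unfolding col_invs_def C
    using sum_square_split[of W b1 b2 "\<lambda>a b. of_bool (is_inv Y t a b)"] assms(3) by simp
qed

text \<open>The combinatorial core of a swap in column \<open>c\<close>: rows \<open>r - 1\<close> and \<open>r\<close> carry \<open>j < m\<close>
  before and \<open>m, j\<close> after the swap, with right neighbours \<open>A\<close> (if \<open>eA\<close>) and \<open>Bv\<close> (if \<open>eB\<close>),
  the right neighbours staying in place.  A third box of the column in row \<open>x\<close> with entry
  \<open>v\<close> and right neighbour \<open>W\<close> (if \<open>eW\<close>) is involved in equally many inversions with the two
  swapped boxes before and after, both if it lies higher up \<dots>\<close>
lemma swap_third_above:
  fixes v j m A Bv W x r :: nat
  assumes "v < m" "j < m" "v \<noteq> j" "eB \<longrightarrow> eA" "eB \<longrightarrow> A < Bv" "eA \<longrightarrow> eW \<and> W < A"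
    "x < r - 1" "1 \<le> r"
  shows "of_bool (col_inv m (r-1) eA A v x eW W) + of_bool (col_inv j r eB Bv v x eW W)
         + of_bool (col_inv v x eW W m (r-1) eA A) + of_bool (col_inv v x eW W j r eB Bv)
    = (of_bool (col_inv j (r-1) eA A v x eW W) + of_bool (col_inv m r eB Bv v x eW W)
       + of_bool (col_inv v x eW W j (r-1) eA A) + of_bool (col_inv v x eW W m r eB Bv) :: nat)"
  using assms unfolding col_inv_def by (cases "v < j"; cases eA; cases eB; cases eW) auto

text \<open>\<dots> and if it lies further down;\<close>
lemma swap_third_below:
  fixes v j m A Bv W x r :: nat
  assumes "v \<noteq> m" "j < m" "v \<noteq> j" "eB \<longrightarrow> eA" "eB \<longrightarrow> A < Bv" "eW \<longrightarrow> eB \<and> Bv < W"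
    "r < x" "1 \<le> r"
  shows "of_bool (col_inv m (r-1) eA A v x eW W) + of_bool (col_inv j r eB Bv v x eW W)
         + of_bool (col_inv v x eW W m (r-1) eA A) + of_bool (col_inv v x eW W j r eB Bv)
    = (of_bool (col_inv j (r-1) eA A v x eW W) + of_bool (col_inv m r eB Bv v x eW W)
       + of_bool (col_inv v x eW W j (r-1) eA A) + of_bool (col_inv v x eW W m r eB Bv) :: nat)"
  using assms unfolding col_inv_def by (cases "v < j"; cases "v < m"; cases eA; cases eB; cases eW) auto

text \<open>while the swapped pair itself gains exactly one inversion.\<close>
lemma swap_pair:
  fixes j m A Bv r :: nat
  assumes "j < m" "eB \<longrightarrow> eA" "eB \<longrightarrow> A < Bv" "1 \<le> r"
  shows "of_bool (col_inv m (r-1) eA A j r eB Bv) + of_bool (col_inv j r eB Bv m (r-1) eA A) =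
     Suc (of_bool (col_inv j (r-1) eA A m r eB Bv) + of_bool (col_inv m r eB Bv j (r-1) eA A))"
  using assms unfolding col_inv_def by (cases eA; cases eB) auto

text \<open>Condition (3) of \<open>D\<close> in the same configuration: an entry \<open>v\<close> strictly between \<open>j\<close> and
  \<open>m\<close> forms an inversion with exactly one of them.\<close>
lemma between_above:
  fixes v j m A Bv W x r :: nat
  assumes "j < v" "v < m" "eB \<longrightarrow> eA" "eB \<longrightarrow> A < Bv" "eA \<longrightarrow> eW \<and> W < A" "x < r - 1"
  shows "col_inv j (r-1) eA A v x eW W \<noteq> col_inv v x eW W m r eB Bv"
  using assms unfolding col_inv_def by auto

lemma between_below:
  fixes v j m A Bv W x r :: nat
  assumes "j < v" "v < m" "eB \<longrightarrow> eA" "eB \<longrightarrow> A < Bv" "eW \<longrightarrow> eB \<and> Bv < W" "r < x"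
  shows "col_inv j (r-1) eA A v x eW W \<noteq> col_inv v x eW W m r eB Bv"
  using assms unfolding col_inv_def by auto


section \<open>The fibre of the standardization map\<close>

locale std_tab =
  fixes Y :: "nat list" and T :: tableau
  assumes young: "young Y" and stdT: "standard Y T"
begin

abbreviation "BX \<equiv> boxes Y"
abbreviation "N \<equiv> size_sh Y"

lemma tabT: "tableau Y T"
  using stdT standard_row_standard row_standard_tableau by blast

definition height :: "nat \<Rightarrow> nat" where
  "height c = card {r. (r, c) \<in> BX}"

lemma col_rows: "{r. (r, c) \<in> BX} = {..<height c}"
  unfolding height_def
proof (rule downclosed_eq_lessThan)
  show "finite {r. (r, c) \<in> BX}"
    by (rule finite_subset[of _ "{..<length Y}"]) (auto simp: in_boxes)
qed (use boxes_down[OF young] in blast)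

lemma col_eq: "col Y c = (\<lambda>r. (r, c)) ` {..<height c}"
  using col_rows[of c] by (force simp: col_def)

lemma card_colset:
  assumes "tableau Y s"
  shows "card (colset Y s c) = height c"
proof -
  have "inj_on s (col Y c)" using tableau_inj[OF assms] by (rule inj_on_subset) (auto simp: col_def)
  then have "card (colset Y s c) = card (col Y c)" unfolding colset_def by (rule card_image)
  also have "\<dots> = height c" unfolding col_eq by (subst card_image) (auto simp: inj_on_def)
  finally show ?thesis .
qed

lemma sorted_colT:
  assumes "r < height c"
  shows "sorted_list_of_set (colset Y T c) ! r = T (r, c)"
proof -
  define l where "l = map (\<lambda>r. T (r, c)) [0..<height c]"
  have "sorted_wrt (<) l" unfolding l_def sorted_wrt_map
    using standard_col_lt[OF young stdT] col_rows[of c]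
    by (auto simp: sorted_wrt_iff_nth_less)
  moreover have "set l = colset Y T c" unfolding l_def colset_def col_eq by auto
  moreover have "length l = card (colset Y T c)" using card_colset[OF tabT] by (simp add: l_def)
  ultimately have "sorted_list_of_set (colset Y T c) = l"
    using sorted_list_of_set_unique[of "colset Y T c" l] finite_col by (simp add: colset_def)
  then show ?thesis using assms by (simp add: l_def)
qed

lemma st_eq_iff:
  assumes "row_standard Y s"
  shows "st Y s = T \<longleftrightarrow> (\<forall>c. colset Y s c = colset Y T c)"
proof
  assume h: "\<forall>c. colset Y s c = colset Y T c"
  show "st Y s = T"
  proof (rule ext, clarify)
    fix r c
    show "st Y s (r, c) = T (r, c)"
    proof (cases "(r, c) \<in> BX")
      case True
      then have "r < height c" using col_rows by blast
      then show ?thesis using True h by (simp add: st_def colset_alt sorted_colT)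
    next
      case False then show ?thesis using tableau_outside[OF tabT] by (simp add: st_def)
    qed
  qed
next
  assume h: "st Y s = T"
  show "\<forall>c. colset Y s c = colset Y T c"
  proof
    fix c
    define L where "L = sorted_list_of_set (colset Y s c)"
    have lenL: "length L = height c"
      unfolding L_def using card_colset[OF row_standard_tableau[OF assms]] finite_col
      by (simp add: colset_def)
    have "colset Y T c = (\<lambda>r. T (r, c)) ` {..<height c}" unfolding colset_def col_eq by auto
    also have "\<dots> = (\<lambda>r. L ! r) ` {..<height c}"
    proof (rule image_cong[OF refl])
      fix r assume "r \<in> {..<height c}"
      then have "(r, c) \<in> BX" using col_rows by blast
      then show "T (r, c) = L ! r" using h[symmetric] by (simp add: st_def colset_alt L_def)
    qed
    also have "\<dots> = set L" using lenL by (auto simp: set_conv_nth)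
    also have "\<dots> = colset Y s c" unfolding L_def using finite_col by (simp add: colset_def)
    finally show "colset Y s c = colset Y T c" ..
  qed
qed


section \<open>Partial fibres and the single swap step\<close>

definition F :: "nat \<Rightarrow> tableau set" where
  "F m = {s. row_standard Y s \<and> (\<forall>c. colset Y s c = colset Y T c)
             \<and> (\<forall>b\<in>BX. m < T b \<longrightarrow> s b = T b)}"

lemma F_tableau: "s \<in> F m \<Longrightarrow> tableau Y s"
  by (simp add: F_def row_standard_tableau)

lemma F_le_iff:
  assumes "s \<in> F m" "b \<in> BX"
  shows "s b \<le> m \<longleftrightarrow> T b \<le> m"
proof
  assume "s b \<le> m"
  then show "T b \<le> m" using assms by (auto simp: F_def)
next
  assume h: "T b \<le> m"
  have ts: "tableau Y s" using assms F_tableau by blast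
  show "s b \<le> m"
  proof (rule ccontr)
    assume "\<not> s b \<le> m"
    moreover obtain b' where b': "b' \<in> BX" "T b' = s b"
      using tableau_surj[OF tabT] tableau_range[OF ts assms(2)] by metis
    ultimately have "s b' = T b'" using assms by (auto simp: F_def)
    then have "b' = b" using tableau_eq_iff[OF ts b'(1) assms(2)] b' by simp
    then show False using h b' \<open>\<not> s b \<le> m\<close> by simp
  qed
qed

lemma F_mono: "s \<in> F (m - 1) \<Longrightarrow> s \<in> F m"
  by (auto simp: F_def)

definition swappable :: "nat \<Rightarrow> nat \<Rightarrow> nat \<Rightarrow> bool" where
  "swappable m r c \<longleftrightarrow> 1 \<le> r \<and> (r, c) \<in> BX \<and> T (r, c) \<le> m \<and>
     ((r - 1, Suc c) \<in> BX \<longrightarrow> m < T (r - 1, Suc c))"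

lemma swappable_facts:
  assumes "swappable m r c"
  shows "\<And>y. y \<le> c \<Longrightarrow> (r, y) \<in> BX \<and> (r - 1, y) \<in> BX \<and> T (r, y) \<le> m \<and> T (r - 1, y) \<le> m"
    and "(r, Suc c) \<in> BX \<Longrightarrow> m < T (r, Suc c)"
    and "(r, Suc c) \<in> BX \<Longrightarrow> (r - 1, Suc c) \<in> BX"
proof -
  have r: "1 \<le> r" "(r, c) \<in> BX" "T (r, c) \<le> m" using assms by (auto simp: swappable_def)
  fix y assume y: "y \<le> c"
  have b1: "(r, y) \<in> BX" "(r - 1, y) \<in> BX" using boxes_down[OF young r(2)] y by auto
  have "T (r, y) \<le> T (r, c)"
    using row_standard_lt[OF standard_row_standard[OF stdT] r(2), of y] y by (cases "y = c") auto
  moreover have "T (r - 1, y) < T (r, y)" using standard_col_lt[OF young stdT b1(1), of "r - 1"] r(1) by simp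
  ultimately show "(r, y) \<in> BX \<and> (r - 1, y) \<in> BX \<and> T (r, y) \<le> m \<and> T (r - 1, y) \<le> m"
    using b1 r by simp
next
  assume h: "(r, Suc c) \<in> BX"
  show b: "(r - 1, Suc c) \<in> BX" using boxes_down[OF young h] by simp
  have "T (r - 1, Suc c) < T (r, Suc c)"
    using standard_col_lt[OF young stdT h, of "r - 1"] assms by (simp add: swappable_def)
  then show "m < T (r, Suc c)" using assms b by (simp add: swappable_def)
qed

text \<open>A swappable swap preserves row-standardness: the swapped segments consist of entries
  \<open>\<le> m\<close>, the entries following them exceed \<open>m\<close>.\<close>
lemma row_standard_sw:
  assumes Fs: "s \<in> F m" and ok: "swappable m r c"
  shows "row_standard Y (s \<circ> sw r c)"
proof -
  have rs: "row_standard Y s" and ts: "tableau Y s" using Fs F_tableau by (auto simp: F_def)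
  have rc: "(r, c) \<in> BX" "1 \<le> r" using ok by (auto simp: swappable_def)
  note facts = swappable_facts[OF ok]
  have low: "s (x, y) \<le> m" if "y \<le> c" "x = r \<or> x = r - 1" for x y
    using facts(1)[OF that(1)] F_le_iff[OF Fs] that(2) by blast
  have high: "m < s (x, Suc c)" if "(x, Suc c) \<in> BX" "x = r \<or> x = r - 1" for x
  proof -
    have "m < T (x, Suc c)" using that facts(2,3) ok by (auto simp: swappable_def)
    then show ?thesis using Fs that by (auto simp: F_def)
  qed
  have "(s \<circ> sw r c) (x, y) < (s \<circ> sw r c) (x, Suc y)"
    if h: "(x, y) \<in> BX" "(x, Suc y) \<in> BX" for x y
  proof (cases "(x = r \<or> x = r - 1) \<and> y \<le> c")
    case False
    then show ?thesis using rs h by (auto simp: row_standard_def sw_def)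
  next
    case swapped: True
    show ?thesis
    proof (cases "y = c")
      case True
      then have "sw r c (x, Suc y) = (x, Suc y)" by (auto simp: sw_def)
      moreover have "s (sw r c (x, y)) \<le> m" using swapped rc by (auto simp: sw_def intro!: low)
      moreover have "m < s (x, Suc y)" using high swapped h True by blast
      ultimately show ?thesis by simp
    next
      case False
      then have y: "Suc y \<le> c" using swapped by simp
      have "s (r - 1, y) < s (r - 1, Suc y)" "s (r, y) < s (r, Suc y)"
        using rs facts(1)[OF y] facts(1)[of y] y by (auto simp: row_standard_def)
      then show ?thesis using swapped y rc by (auto simp: sw_def)
    qed
  qed
  then show ?thesis using tableau_sw[OF young rc(1) ts] by (simp add: row_standard_def)
qed

lemma F_sw:
  assumes Fs: "s \<in> F m" and ok: "swappable m r c"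
  shows "s \<circ> sw r c \<in> F m"
proof -
  have rc: "(r, c) \<in> BX" using ok by (simp add: swappable_def)
  have "(s \<circ> sw r c) b = T b" if "b \<in> BX" "m < T b" for b
  proof -
    obtain x y where b: "b = (x, y)" by (cases b)
    have "sw r c b = b"
      using swappable_facts(1)[OF ok, of y] that b by (intro sw_out) (cases "y \<le> c"; auto)
    then show ?thesis using Fs that by (auto simp: F_def)
  qed
  then show ?thesis
    using Fs row_standard_sw[OF Fs ok] colset_sw[OF young rc] by (simp add: F_def)
qed


context
  fixes s :: tableau and m r c :: nat
  assumes Fs: "s \<in> F m" and ok: "swappable m r c" and s_rc: "s (r, c) = m"
begin

lemma swap_boxes: "1 \<le> r" "(r, c) \<in> BX" "(r - 1, c) \<in> BX"
  using ok swappable_facts(1)[OF ok, of c] by (auto simp: swappable_def)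

lemma upper_lt: "s (r - 1, c) < m"
proof -
  have "s (r - 1, c) \<le> m" using F_le_iff[OF Fs swap_boxes(3)] swappable_facts(1)[OF ok, of c] by simp
  moreover have "s (r - 1, c) \<noteq> m"
    using tableau_eq_iff[OF F_tableau[OF Fs] swap_boxes(3,2)] swap_boxes(1) s_rc by auto
  ultimately show ?thesis by simp
qed

lemma right_lower:
  assumes h: "(r, Suc c) \<in> BX"
  shows "(r - 1, Suc c) \<in> BX \<and> m < s (r, Suc c) \<and> s (r - 1, Suc c) < s (r, Suc c)"
proof -
  have "m < T (r, Suc c)" "T (r - 1, Suc c) < T (r, Suc c)"
    using swappable_facts(2)[OF ok h] standard_col_lt[OF young stdT h, of "r - 1"] swap_boxes(1)
    by auto
  moreover have "m < T (r - 1, Suc c)" using ok swappable_facts(3)[OF ok h] by (auto simp: swappable_def)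
  ultimately show ?thesis using Fs h swappable_facts(3)[OF ok h] by (auto simp: F_def)
qed

lemma rows_above:
  assumes "x < r - 1"
  shows "s (x, c) < m \<and>
    ((r - 1, Suc c) \<in> BX \<longrightarrow> (x, Suc c) \<in> BX \<and> s (x, Suc c) < s (r - 1, Suc c))"
proof -
  have xb: "(x, c) \<in> BX" using boxes_down[OF young swap_boxes(3)] assms by simp
  have "T (x, c) < T (r, c)" using standard_col_lt[OF young stdT swap_boxes(2)] assms by simp
  then have "s (x, c) \<le> m" using F_le_iff[OF Fs xb] swappable_facts(1)[OF ok, of c] by simp
  moreover have "s (x, c) \<noteq> m"
    using tableau_eq_iff[OF F_tableau[OF Fs] xb swap_boxes(2)] assms s_rc by auto
  moreover have "(x, Suc c) \<in> BX \<and> s (x, Suc c) < s (r - 1, Suc c)" if h: "(r - 1, Suc c) \<in> BX"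
  proof
    show xb': "(x, Suc c) \<in> BX" using boxes_down[OF young h, of x "Suc c"] assms by simp
    have "T (x, Suc c) < T (r - 1, Suc c)" using standard_col_lt[OF young stdT h] assms by simp
    moreover have "m < T (r - 1, Suc c)" using ok h by (simp add: swappable_def)
    moreover have "s (r - 1, Suc c) = T (r - 1, Suc c)" using Fs h \<open>m < T (r - 1, Suc c)\<close> by (auto simp: F_def)
    moreover have "s (x, Suc c) \<le> m \<or> s (x, Suc c) = T (x, Suc c)"
      using Fs xb' F_le_iff[OF Fs xb'] by (cases "m < T (x, Suc c)") (auto simp: F_def)
    ultimately show "s (x, Suc c) < s (r - 1, Suc c)" by linarith
  qed
  ultimately show ?thesis by auto
qed

lemma rows_below:
  assumes "r < x" "(x, Suc c) \<in> BX"
  shows "(r, Suc c) \<in> BX \<and> s (r, Suc c) < s (x, Suc c)"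
proof
  show rb: "(r, Suc c) \<in> BX" using boxes_down[OF young assms(2)] assms(1) by simp
  have "T (r, Suc c) < T (x, Suc c)" using standard_col_lt[OF young stdT assms(2)] assms(1) by simp
  moreover have "m < T (r, Suc c)" using swappable_facts(2)[OF ok rb] .
  ultimately show "s (r, Suc c) < s (x, Suc c)" using Fs assms(2) rb by (auto simp: F_def)
qed

text \<open>The configuration hypotheses of the lemmas \<open>swap_*\<close> and \<open>between_*\<close>.\<close>
lemma config:
  "(r, Suc c) \<in> BX \<longrightarrow> (r - 1, Suc c) \<in> BX"
  "(r, Suc c) \<in> BX \<longrightarrow> s (r - 1, Suc c) < s (r, Suc c)"
  "x < r - 1 \<Longrightarrow> (r - 1, Suc c) \<in> BX \<longrightarrow> (x, Suc c) \<in> BX \<and> s (x, Suc c) < s (r - 1, Suc c)"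
  "r < x \<Longrightarrow> (x, Suc c) \<in> BX \<longrightarrow> (r, Suc c) \<in> BX \<and> s (r, Suc c) < s (x, Suc c)"
  using right_lower rows_above rows_below by auto

lemma pos_m: "pos Y s m = (r, c)"
  using pos_eq[OF F_tableau[OF Fs] swap_boxes(2) s_rc] .

lemma in_D: "s \<in> D Y m"
proof -
  note X1 = swap_boxes(3) and X2 = swap_boxes(2)
  have rs: "row_standard Y s" using Fs by (simp add: F_def)
  have cond3: "is_inv Y s (r - 1, c) k \<noteq> is_inv Y s k (r, c)"
    if k: "k \<in> BX" "snd k = c" "s (r - 1, c) < s k" "s k < m" for k
  proof -
    obtain x where kx: "k = (x, c)" using k by (cases k) auto
    have xr: "x \<noteq> r" "x \<noteq> r - 1" using k kx s_rc by auto
    have kb: "(x, c) \<in> BX" using k kx by simp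
    consider "x < r - 1" | "r < x" using xr by linarith
    then show ?thesis
    proof cases
      case 1
      show ?thesis
        unfolding kx is_inv_col_inv[OF X1 kb] is_inv_col_inv[OF kb X2] s_rc
        by (rule between_above) (use k kx config(1,2) config(3)[OF 1] 1 in auto)
    next
      case 2
      show ?thesis
        unfolding kx is_inv_col_inv[OF X1 kb] is_inv_col_inv[OF kb X2] s_rc
        by (rule between_below) (use k kx config(1,2) config(4)[OF 2] 2 in auto)
    qed
  qed
  have "(r - 1, Suc c) \<in> BX \<longrightarrow> m < s (r - 1, Suc c)"
    using ok Fs by (auto simp: swappable_def F_def)
  then show ?thesis unfolding D_def
    using rs pos_m swap_boxes(1) upper_lt right_lower cond3 s_rc by (auto simp: Let_def right_def)
qed

lemma sw_values:
  "(s \<circ> sw r c) (r - 1, c) = m" "(s \<circ> sw r c) (r, c) = s (r - 1, c)"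
  "x \<noteq> r \<Longrightarrow> x \<noteq> r - 1 \<Longrightarrow> (s \<circ> sw r c) (x, y) = s (x, y)"
  "(s \<circ> sw r c) (x, Suc c) = s (x, Suc c)"
  using swap_boxes(1) s_rc by (auto simp: sw_def)

lemma third_box_invs:
  assumes w: "w \<in> col Y c" "w \<noteq> (r - 1, c)" "w \<noteq> (r, c)"
  defines "cnt t \<equiv> (of_bool (is_inv Y t (r - 1, c) w) + of_bool (is_inv Y t (r, c) w)
    + of_bool (is_inv Y t w (r - 1, c)) + of_bool (is_inv Y t w (r, c)) :: nat)"
  shows "cnt (s \<circ> sw r c) = cnt s"
proof -
  note X1 = swap_boxes(3) and X2 = swap_boxes(2) and r1 = swap_boxes(1)
  obtain x where wx: "w = (x, c)" and wb: "(x, c) \<in> BX" using w by (cases w) (auto simp: col_def)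
  have xr: "x \<noteq> r" "x \<noteq> r - 1" using w wx by auto
  have vj: "s (x, c) \<noteq> s (r - 1, c)" "s (x, c) \<noteq> m"
    using tableau_eq_iff[OF F_tableau[OF Fs] wb X1] tableau_eq_iff[OF F_tableau[OF Fs] wb X2] xr s_rc
    by auto
  note e = cnt_def wx is_inv_col_inv[OF X1 wb] is_inv_col_inv[OF X2 wb] is_inv_col_inv[OF wb X1]
    is_inv_col_inv[OF wb X2] sw_values(1,2,4) sw_values(3)[OF xr] s_rc
  consider "x < r - 1" | "r < x" using xr by linarith
  then show ?thesis
  proof cases
    case 1
    show ?thesis unfolding e
      by (intro swap_third_above) (use vj upper_lt r1 rows_above[OF 1] config(1,2) 1 in auto)
  next
    case 2
    show ?thesis unfolding e
      by (intro swap_third_below) (use vj upper_lt r1 config(1,2) config(4)[OF 2] 2 in auto)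
  qed
qed

lemma swapped_pair_invs:
  "of_bool (is_inv Y (s \<circ> sw r c) (r - 1, c) (r, c)) + of_bool (is_inv Y (s \<circ> sw r c) (r, c) (r - 1, c))
   = Suc (of_bool (is_inv Y s (r - 1, c) (r, c)) + of_bool (is_inv Y s (r, c) (r - 1, c)))"
  unfolding is_inv_col_inv[OF swap_boxes(3,2)] is_inv_col_inv[OF swap_boxes(2,3)] sw_values(1,2,4) s_rc
  by (rule swap_pair) (use upper_lt swap_boxes(1) config(1,2) in auto)

lemma col_invs_sw: "col_invs Y (s \<circ> sw r c) c = Suc (col_invs Y s c)"
proof -
  let ?i = "\<lambda>t a b. of_bool (is_inv Y t a b) :: nat"
  define W where "W = col Y c - {(r - 1, c), (r, c)}"
  have X: "(r - 1, c) \<in> col Y c" "(r, c) \<in> col Y c" "(r - 1, c) \<noteq> (r, c)"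
    using swap_boxes by (auto simp: col_def)
  note split = col_invs_split[OF X, folded W_def]
  have "(\<Sum>w\<in>W. ?i (s \<circ> sw r c) (r - 1, c) w + ?i (s \<circ> sw r c) (r, c) w
        + ?i (s \<circ> sw r c) w (r - 1, c) + ?i (s \<circ> sw r c) w (r, c))
      = (\<Sum>w\<in>W. ?i s (r - 1, c) w + ?i s (r, c) w + ?i s w (r - 1, c) + ?i s w (r, c))"
    by (rule sum.cong[OF refl]) (rule third_box_invs; simp add: W_def)
  moreover have "(\<Sum>p\<in>W \<times> W. ?i (s \<circ> sw r c) (fst p) (snd p)) = (\<Sum>p\<in>W \<times> W. ?i s (fst p) (snd p))"
  proof (rule sum.cong[OF refl])
    fix p assume p: "p \<in> W \<times> W"
    obtain x1 y1 x2 y2 where pp: "p = ((x1, y1), (x2, y2))" by (cases p) auto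
    then have "y1 = c" "y2 = c" "x1 \<noteq> r" "x1 \<noteq> r - 1" "x2 \<noteq> r" "x2 \<noteq> r - 1"
      using p by (auto simp: W_def col_def)
    then show "?i (s \<circ> sw r c) (fst p) (snd p) = ?i s (fst p) (snd p)"
      using pp by (simp add: is_inv_def right_def sw_values(3,4) del: comp_apply)
  qed
  ultimately show ?thesis
    using split[of s] split[of "s \<circ> sw r c"] swapped_pair_invs by linarith
qed

lemma n_inv_sw: "n_inv Y (s \<circ> sw r c) = Suc (n_inv Y s)"
  using n_inv_sw_balance[OF young swap_boxes(2,1), of s] col_invs_sw by simp

end


section \<open>The rows counted by \<open>p_m\<close>\<close>

definition cm :: "nat \<Rightarrow> nat" where "cm m = snd (pos Y T m)"
definition rm :: "nat \<Rightarrow> nat" where "rm m = fst (pos Y T m)"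

text \<open>Row \<open>r\<close> of the subtableau \<open>T[1..m]\<close> ends exactly in the column \<open>cm m\<close> of \<open>m\<close>.\<close>
definition ends :: "nat \<Rightarrow> nat \<Rightarrow> bool" where
  "ends m r \<longleftrightarrow> (r, cm m) \<in> BX \<and> T (r, cm m) \<le> m \<and>
     ((r, Suc (cm m)) \<in> BX \<longrightarrow> m < T (r, Suc (cm m)))"

context
  fixes m assumes m1: "1 \<le> m" and mN: "m \<le> N"
begin

lemma posT: "(rm m, cm m) \<in> BX" "T (rm m, cm m) = m"
  using pos_in[OF tabT m1 mN] by (auto simp: rm_def cm_def)

lemma ends_le: "ends m r \<Longrightarrow> r \<le> rm m"
proof (rule ccontr)
  assume b: "ends m r" and "\<not> r \<le> rm m"
  then have "T (rm m, cm m) < T (r, cm m)"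
    using standard_col_lt[OF young stdT, of r "cm m" "rm m"] by (auto simp: ends_def)
  then show False using b posT by (simp add: ends_def)
qed

lemma ends_rm: "ends m (rm m)"
  using posT row_standard_lt[OF standard_row_standard[OF stdT], of "rm m" "Suc (cm m)" "cm m"]
  by (auto simp: ends_def)

lemma ends_mid:
  assumes "ends m r1" "r1 \<le> r" "r \<le> rm m"
  shows "ends m r"
proof -
  have rb: "(r, cm m) \<in> BX" using boxes_down[OF young posT(1)] assms by simp
  have "T (r, cm m) \<le> m"
    using posT standard_col_lt[OF young stdT posT(1), of r] assms(3) by (cases "r = rm m") auto
  moreover have "m < T (r, Suc (cm m))" if h: "(r, Suc (cm m)) \<in> BX"
  proof -
    have "(r1, Suc (cm m)) \<in> BX" using boxes_down[OF young h] assms by simp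
    then have "m < T (r1, Suc (cm m))" using assms by (simp add: ends_def)
    moreover have "T (r1, Suc (cm m)) \<le> T (r, Suc (cm m))"
      using standard_col_lt[OF young stdT h, of r1] assms(2) by (cases "r1 = r") auto
    ultimately show ?thesis by simp
  qed
  ultimately show ?thesis using rb by (simp add: ends_def)
qed

lemma row_length_iff:
  assumes "r < length Y"
  shows "card {c. (r, c) \<in> BX \<and> T (r, c) \<le> m} = Suc (cm m) \<longleftrightarrow> ends m r"
proof -
  define S where "S = {c. (r, c) \<in> BX \<and> T (r, c) \<le> m}"
  have fin: "finite S" by (rule finite_subset[of _ "{..<Y ! r}"]) (auto simp: S_def in_boxes)
  have dc: "y \<in> S" if "x \<in> S" "y \<le> x" for x y
  proof -
    have "(r, y) \<in> BX" using that boxes_down[OF young] by (auto simp: S_def)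
    moreover have "T (r, y) \<le> T (r, x)" using that row_standard_lt[OF standard_row_standard[OF stdT], of r x y]
      by (cases "y = x") (auto simp: S_def)
    ultimately show ?thesis using that by (auto simp: S_def)
  qed
  have S_eq: "S = {..<card S}" by (rule downclosed_eq_lessThan[OF fin dc])
  have "card S = Suc (cm m) \<longleftrightarrow> cm m \<in> S \<and> Suc (cm m) \<notin> S"
    by (subst (2 3) S_eq) auto
  then show ?thesis unfolding S_def[symmetric] by (auto simp: S_def ends_def)
qed

lemma prow_eq: "prow Y T m = card {r. ends m r}"
proof -
  have q: "qcol Y T m = Suc (cm m)" by (simp add: qcol_def cm_def)
  have "{r. r < length Y \<and> card {c. (r, c) \<in> BX \<and> T (r, c) \<le> m} = qcol Y T m}
      = {r. ends m r}"
  proof (rule Collect_cong)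
    fix r
    have "ends m r \<Longrightarrow> r < length Y" by (simp add: ends_def in_boxes)
    then show "r < length Y \<and> card {c. (r, c) \<in> BX \<and> T (r, c) \<le> m} = qcol Y T m \<longleftrightarrow> ends m r"
      unfolding q using row_length_iff[of r] by blast
  qed
  then show ?thesis by (simp add: prow_def)
qed

lemma ends_interval: "t < prow Y T m \<longleftrightarrow> t \<le> rm m \<and> ends m (rm m - t)"
proof -
  define S where "S = {r. ends m r}"
  have fin: "finite S" by (rule finite_subset[of _ "{..rm m}"]) (auto simp: S_def ends_le)
  have "rm m \<in> S" using ends_rm by (simp add: S_def)
  define a where "a = Min S"
  have aS: "a \<in> S" using fin \<open>rm m \<in> S\<close> unfolding a_def by (metis Min_in empty_iff)
  have S_eq: "S = {a..rm m}"
  proof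
    show "S \<subseteq> {a..rm m}"
    proof
      fix x assume x: "x \<in> S"
      have "a \<le> x" unfolding a_def using fin x by (rule Min_le)
      moreover have "x \<le> rm m" using x ends_le by (simp add: S_def)
      ultimately show "x \<in> {a..rm m}" by simp
    qed
    show "{a..rm m} \<subseteq> S"
      using ends_mid[of a] aS by (auto simp: S_def)
  qed
  have "prow Y T m = Suc (rm m) - a" by (simp add: prow_eq S_def[symmetric] S_eq)
  moreover have "a \<le> rm m" using aS ends_le by (simp add: S_def)
  moreover have Sx: "ends m x \<longleftrightarrow> a \<le> x \<and> x \<le> rm m" for x
  proof -
    have "x \<in> S \<longleftrightarrow> x \<in> {a..rm m}" using S_eq by simp
    then show ?thesis by (simp add: S_def)
  qed
  ultimately show ?thesis unfolding Sx[of "rm m - t"] by linarith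
qed

lemma prow_pos: "0 < prow Y T m"
  using ends_interval[of 0] ends_rm by simp

lemma ends_swappable: "ends m r \<Longrightarrow> ends m (r - 1) \<Longrightarrow> 1 \<le> r \<Longrightarrow> swappable m r (cm m)"
  by (simp add: ends_def swappable_def)


section \<open>The orbit decomposition of \<open>F m\<close>\<close>

lemma F_pos_m:
  assumes "s \<in> F m"
  shows "\<exists>r. (r, cm m) \<in> BX \<and> s (r, cm m) = m \<and> ends m r"
proof -
  have ts: "tableau Y s" and rs: "row_standard Y s" using assms F_tableau by (auto simp: F_def)
  obtain b where b: "b \<in> BX" "s b = m" using tableau_surj[OF ts m1 mN] by blast
  have "m \<in> colset Y T (snd b)" using assms b by (auto simp: F_def colset_def col_def dest!: spec[of _ "snd b"])
  then obtain b' where b': "b' \<in> BX" "snd b' = snd b" "T b' = m" by (auto simp: colset_def col_def)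
  have "b' = pos Y T m" using pos_eq[OF tabT b'(1,3)] by simp
  then have c: "snd b = cm m" using b' by (simp add: cm_def)
  obtain r where r: "b = (r, cm m)" using c by (cases b) auto
  have "T (r, cm m) \<le> m" using F_le_iff[OF assms, of "(r, cm m)"] b r by auto
  moreover have "m < T (r, Suc (cm m))" if h: "(r, Suc (cm m)) \<in> BX"
  proof -
    have "s (r, cm m) < s (r, Suc (cm m))" using row_standard_lt[OF rs h] by simp
    then show ?thesis using F_le_iff[OF assms h] b r by auto
  qed
  ultimately show ?thesis using b r by (auto simp: ends_def)
qed

lemma F_pred_iff: "s \<in> F (m - 1) \<longleftrightarrow> s \<in> F m \<and> s (rm m, cm m) = m"
proof
  assume "s \<in> F (m - 1)"
  then show "s \<in> F m \<and> s (rm m, cm m) = m" using F_mono posT m1 by (auto simp: F_def)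
next
  assume h: "s \<in> F m \<and> s (rm m, cm m) = m"
  have "s b = T b" if "b \<in> BX" "m - 1 < T b" for b
  proof (cases "T b = m")
    case True
    then have "b = (rm m, cm m)" using tableau_eq_iff[OF tabT that(1) posT(1)] posT by simp
    then show ?thesis using h True by simp
  next
    case False then show ?thesis using h that by (auto simp: F_def)
  qed
  then show "s \<in> F (m - 1)" using h by (auto simp: F_def)
qed

abbreviation dl :: "tableau \<Rightarrow> tableau" where "dl \<equiv> delta Y m"

lemma orbit:
  assumes s0: "s0 \<in> F (m - 1)" and t: "t < prow Y T m"
  shows "(dl ^^ t) s0 \<in> F m \<and> (dl ^^ t) s0 (rm m - t, cm m) = m
         \<and> n_inv Y ((dl ^^ t) s0) = n_inv Y s0 + t"
  using t
proof (induction t)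
  case 0 then show ?case using F_pred_iff s0 by simp
next
  case (Suc t)
  define s where "s = (dl ^^ t) s0"
  define r where "r = rm m - t"
  have IH: "s \<in> F m" "s (r, cm m) = m" "n_inv Y s = n_inv Y s0 + t"
    using Suc by (auto simp: s_def r_def)
  have b1: "Suc t \<le> rm m" "ends m (rm m - Suc t)" using ends_interval Suc.prems by auto
  have b0: "ends m r" using ends_interval[of t] Suc.prems by (simp add: r_def)
  have r1: "1 \<le> r" and r_pred: "r - 1 = rm m - Suc t" using b1 by (auto simp: r_def)
  have ok: "swappable m r (cm m)" using ends_swappable b0 b1 r1 r_pred by simp
  have rb: "(r, cm m) \<in> BX" using b0 by (simp add: ends_def)
  have eq: "(dl ^^ Suc t) s0 = s \<circ> sw r (cm m)"
    using delta_sw[OF pos_m[OF IH(1) ok IH(2)]] by (simp add: s_def)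
  have "(s \<circ> sw r (cm m)) (rm m - Suc t, cm m) = m"
    using r1 IH(2) r_pred by (simp add: sw_def)
  moreover have "n_inv Y (s \<circ> sw r (cm m)) = n_inv Y s0 + Suc t"
    using n_inv_sw[OF IH(1) ok IH(2)] IH(3) by simp
  ultimately show ?case unfolding eq using F_sw[OF IH(1) ok] by blast
qed

lemma orbit_in_D:
  assumes s0: "s0 \<in> F (m - 1)" and t: "Suc t < prow Y T m"
  shows "(dl ^^ t) s0 \<in> D Y m"
proof -
  have it: "(dl ^^ t) s0 \<in> F m" "(dl ^^ t) s0 (rm m - t, cm m) = m" using orbit[OF s0] t by auto
  have "Suc t \<le> rm m" "ends m (rm m - Suc t)" "ends m (rm m - t)"
    using ends_interval[of t] ends_interval[of "Suc t"] t by auto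
  then have "swappable m (rm m - t) (cm m)" using ends_swappable by (simp add: Suc_diff_Suc)
  then show ?thesis using in_D[OF it(1) _ it(2)] by simp
qed

text \<open>Every member of \<open>F m\<close> arises in this way, by moving \<open>m\<close> back down to its place.\<close>
lemma orbit_cover:
  assumes "s \<in> F m"
  shows "\<exists>t s0. t < prow Y T m \<and> s0 \<in> F (m - 1) \<and> s = (dl ^^ t) s0"
proof -
  obtain r where r: "(r, cm m) \<in> BX" "s (r, cm m) = m" "ends m r" using F_pos_m[OF assms] by blast
  define k where "k = rm m - r"
  show ?thesis using assms r k_def
  proof (induction k arbitrary: s r)
    case 0
    then have "r = rm m" using ends_le by fastforce
    then have "s \<in> F (m - 1)" using 0 F_pred_iff by simp
    then show ?case using prow_pos by (intro exI[of _ 0] exI[of _ s]) simp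
  next
    case (Suc k)
    have rr: "r < rm m" "ends m (Suc r)" using Suc.prems ends_le[of r] ends_mid[of r "Suc r"] by auto
    have ok: "swappable m (Suc r) (cm m)" using rr Suc.prems by (simp add: ends_def swappable_def)
    define s1 where "s1 = s \<circ> sw (Suc r) (cm m)"
    have s1F: "s1 \<in> F m" using F_sw[OF Suc.prems(1) ok] by (simp add: s1_def)
    have s1m: "s1 (Suc r, cm m) = m" using Suc.prems by (simp add: s1_def sw_def)
    have s1b: "(Suc r, cm m) \<in> BX" using rr by (simp add: ends_def)
    have "k = rm m - Suc r" using Suc.prems(5) by simp
    then obtain t s0 where ts: "t < prow Y T m" "s0 \<in> F (m - 1)" "s1 = (dl ^^ t) s0"
      using Suc.IH[OF s1F s1b s1m rr(2)] by blast
    have tb: "(rm m - t, cm m) \<in> BX" using ends_interval ts(1) by (simp add: ends_def)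
    have "rm m - t = Suc r"
      using tableau_eq_iff[OF F_tableau[OF s1F] tb s1b] orbit[OF ts(2,1)] ts(3) s1m by simp
    then have "rm m - Suc t = r" "Suc t \<le> rm m" by arith+
    then have tt: "Suc t < prow Y T m" using ends_interval[of "Suc t"] Suc.prems by simp
    have "dl s1 = s1 \<circ> sw (Suc r) (cm m)" using delta_sw[OF pos_eq[OF F_tableau[OF s1F] s1b s1m]] .
    also have "\<dots> = s" by (rule ext) (simp add: s1_def)
    finally have "dl s1 = s" .
    then show ?case using tt ts by (intro exI[of _ "Suc t"] exI[of _ s0]) simp
  qed
qed

text \<open>\<dots> and uniquely so, since the row of \<open>m\<close> determines \<open>t\<close> and each step is invertible.\<close>
lemma orbit_inj:
  assumes "s0 \<in> F (m - 1)" "s0' \<in> F (m - 1)" "t < prow Y T m" "t' < prow Y T m"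
    and eq: "(dl ^^ t) s0 = (dl ^^ t') s0'"
  shows "t = t' \<and> s0 = s0'"
proof -
  have pos_t: "pos Y ((dl ^^ u) s) m = (rm m - u, cm m)"
    if "s \<in> F (m - 1)" "u < prow Y T m" for s u
  proof -
    have "(dl ^^ u) s \<in> F m" "(dl ^^ u) s (rm m - u, cm m) = m" using orbit[OF that] by auto
    moreover have "(rm m - u, cm m) \<in> BX" using ends_interval that(2) by (simp add: ends_def)
    ultimately show ?thesis using pos_eq F_tableau by blast
  qed
  have "(rm m - t, cm m) = (rm m - t', cm m)" using pos_t[OF assms(1,3)] pos_t[OF assms(2,4)] eq by simp
  moreover have "t \<le> rm m" "t' \<le> rm m" using ends_interval assms(3,4) by auto
  ultimately have tt: "t = t'" by simp
  have "u < prow Y T m \<Longrightarrow> (dl ^^ u) s0 = (dl ^^ u) s0' \<Longrightarrow> s0 = s0'" for u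
  proof (induction u)
    case (Suc u)
    then have u: "u < prow Y T m" by simp
    have "dl ((dl ^^ u) s0) = dl ((dl ^^ u) s0')" using Suc.prems(2) by simp
    then have "(dl ^^ u) s0 \<circ> sw (rm m - u) (cm m) = (dl ^^ u) s0' \<circ> sw (rm m - u) (cm m)"
      by (simp only: delta_sw[OF pos_t[OF assms(1) u]] delta_sw[OF pos_t[OF assms(2) u]])
    then have "(dl ^^ u) s0 = (dl ^^ u) s0'" by (rule comp_sw_cancel)
    then show ?case using Suc.IH u by simp
  qed simp
  then show ?thesis using tt eq assms(3) by simp
qed

end


lemma T_F0: "T \<in> F 0"
  using stdT by (simp add: F_def standard_row_standard)

lemma n_inv_T: "n_inv Y T = 0"
proof -
  have "\<not> is_inv Y T b1 b2" for b1 b2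
  proof
    assume h: "is_inv Y T b1 b2"
    obtain x1 y x2 y2 where b: "b1 = (x1, y)" "b2 = (x2, y2)" by (cases b1, cases b2)
    have bb: "(x1, y) \<in> BX" "(x2, y) \<in> BX" "T (x1, y) < T (x2, y)" "y2 = y"
      using h b by (auto simp: is_inv_def)
    have "x1 < x2"
      using standard_col_lt[OF young stdT bb(1), of x2] bb by (cases x1 x2 rule: linorder_cases) auto
    moreover have "T (x1, Suc y) < T (x2, Suc y)" if "(x2, Suc y) \<in> BX"
      using standard_col_lt[OF young stdT that \<open>x1 < x2\<close>] .
    ultimately show False using h b bb by (auto simp: is_inv_def right_def)
  qed
  then show ?thesis by (simp add: n_inv_def)
qed

lemma seq_app_cong: "(\<forall>i<m. ks ! i = ks' ! i) \<Longrightarrow> seq_app Y ks m T = seq_app Y ks' m T"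
  by (induction m) auto

lemma admissible_iff:
  "admissible Y T ks \<longleftrightarrow> length ks = N \<and> (\<forall>i<N. ks ! i < prow Y T (Suc i))"
proof -
  have "(\<forall>i\<in>{1..N}. ks ! (i - 1) \<le> prow Y T i - 1) \<longleftrightarrow> (\<forall>i<N. ks ! i < prow Y T (Suc i))"
  proof
    assume h: "\<forall>i\<in>{1..N}. ks ! (i - 1) \<le> prow Y T i - 1"
    show "\<forall>i<N. ks ! i < prow Y T (Suc i)"
    proof (intro allI impI)
      fix i assume "i < N"
      then show "ks ! i < prow Y T (Suc i)" using h[rule_format, of "Suc i"] prow_pos[of "Suc i"] by simp
    qed
  next
    assume h: "\<forall>i<N. ks ! i < prow Y T (Suc i)"
    show "\<forall>i\<in>{1..N}. ks ! (i - 1) \<le> prow Y T i - 1"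
    proof
      fix i assume "i \<in> {1..N}"
      then obtain j where "i = Suc j" "j < N" by (cases i) auto
      then show "ks ! (i - 1) \<le> prow Y T i - 1" using h by fastforce
    qed
  qed
  then show ?thesis by (simp add: admissible_def)
qed

lemma seq_app_F:
  assumes adm: "admissible Y T ks" and "m \<le> N"
  shows "seq_app Y ks m T \<in> F m \<and> n_inv Y (seq_app Y ks m T) = (\<Sum>i<m. ks ! i) \<and>
    (\<forall>i\<in>{1..m}. \<forall>t<ks ! (i - 1). (delta Y i ^^ t) (seq_app Y ks (i - 1) T) \<in> D Y i)"
  using \<open>m \<le> N\<close>
proof (induction m)
  case 0 then show ?case using T_F0 n_inv_T by simp
next
  case (Suc m)
  define s0 where "s0 = seq_app Y ks m T"
  have IH: "s0 \<in> F (Suc m - 1)" "n_inv Y s0 = (\<Sum>i<m. ks ! i)"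
     "\<forall>i\<in>{1..m}. \<forall>t<ks ! (i - 1). (delta Y i ^^ t) (seq_app Y ks (i - 1) T) \<in> D Y i"
    using Suc.IH Suc.prems by (simp_all add: s0_def)
  have m1: "1 \<le> Suc m" "Suc m \<le> N" using Suc.prems by auto
  have kt: "ks ! m < prow Y T (Suc m)" using adm Suc.prems by (simp add: admissible_iff)
  have step: "seq_app Y ks (Suc m) T = (delta Y (Suc m) ^^ (ks ! m)) s0" by (simp add: s0_def)
  have last: "(delta Y (Suc m) ^^ t) (seq_app Y ks m T) \<in> D Y (Suc m)" if "t < ks ! m" for t
    using orbit_in_D[OF m1 IH(1), of t] that kt by (simp add: s0_def)
  have "\<forall>i\<in>{1..Suc m}. \<forall>t<ks ! (i - 1). (delta Y i ^^ t) (seq_app Y ks (i - 1) T) \<in> D Y i"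
  proof
    fix i assume "i \<in> {1..Suc m}"
    then consider "i \<in> {1..m}" | "i = Suc m" by fastforce
    then show "\<forall>t<ks ! (i - 1). (delta Y i ^^ t) (seq_app Y ks (i - 1) T) \<in> D Y i"
      using IH(3) last by cases auto
  qed
  moreover have "n_inv Y (seq_app Y ks (Suc m) T) = (\<Sum>i<Suc m. ks ! i)"
    using orbit[OF m1 IH(1) kt] IH(2) step by simp
  ultimately show ?case using orbit[OF m1 IH(1) kt] step by simp
qed

lemma seq_app_surj: "m \<le> N \<Longrightarrow> s \<in> F m \<Longrightarrow> \<exists>ks. admissible Y T ks \<and> seq_app Y ks m T = s"
proof (induction m arbitrary: s)
  case 0
  have "s = T"
  proof
    fix b show "s b = T b"
    proof (cases "b \<in> BX")
      case True then show ?thesis using 0 tableau_range[OF tabT True] by (auto simp: F_def)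
    next
      case False then show ?thesis using tableau_outside[OF tabT False] tableau_outside[OF F_tableau[OF 0(2)] False] by simp
    qed
  qed
  moreover have "admissible Y T (replicate N 0)" using prow_pos by (simp add: admissible_iff)
  ultimately show ?case by (intro exI[of _ "replicate N 0"]) simp
next
  case (Suc m)
  have m1: "1 \<le> Suc m" "Suc m \<le> N" using Suc.prems by auto
  obtain t s0 where ts: "t < prow Y T (Suc m)" "s0 \<in> F m" "s = (delta Y (Suc m) ^^ t) s0"
    using orbit_cover[OF m1 Suc.prems(2)] by auto
  obtain ks where ks: "admissible Y T ks" "seq_app Y ks m T = s0" using Suc.IH[OF _ ts(2)] Suc.prems by auto
  have len: "length ks = N" using ks by (simp add: admissible_iff)
  have "admissible Y T (ks[m := t])" using ks ts(1) len m1 by (auto simp: admissible_iff nth_list_update)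
  moreover have "seq_app Y (ks[m := t]) (Suc m) T = s"
    using ks seq_app_cong[of m "ks[m := t]" ks] ts len m1 by simp
  ultimately show ?case by blast
qed

lemma seq_app_inj:
  "admissible Y T ks \<Longrightarrow> admissible Y T ks' \<Longrightarrow> m \<le> N \<Longrightarrow>
   seq_app Y ks m T = seq_app Y ks' m T \<Longrightarrow> \<forall>i<m. ks ! i = ks' ! i"
proof (induction m)
  case (Suc m)
  have m1: "1 \<le> Suc m" "Suc m \<le> N" using Suc.prems by auto
  have F: "seq_app Y ks m T \<in> F (Suc m - 1)" "seq_app Y ks' m T \<in> F (Suc m - 1)"
    using seq_app_F[OF Suc.prems(1), of m] seq_app_F[OF Suc.prems(2), of m] m1 by simp_all
  have k: "ks ! m < prow Y T (Suc m)" "ks' ! m < prow Y T (Suc m)"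
    using Suc.prems m1 by (simp_all add: admissible_iff)
  have "(delta Y (Suc m) ^^ (ks ! m)) (seq_app Y ks m T)
      = (delta Y (Suc m) ^^ (ks' ! m)) (seq_app Y ks' m T)"
    using Suc.prems(4) by simp
  then have "ks ! m = ks' ! m \<and> seq_app Y ks m T = seq_app Y ks' m T"
    by (rule orbit_inj[OF m1 F k])
  then show ?case using Suc.IH Suc.prems by (auto simp: less_Suc_eq)
qed simp

lemma fibre_eq_F: "row_standard Y s \<and> st Y s = T \<longleftrightarrow> s \<in> F N"
proof -
  have "\<forall>b\<in>BX. \<not> N < T b" using tableau_range[OF tabT] by (simp add: not_less)
  then show ?thesis using st_eq_iff by (auto simp: F_def)
qed

abbreviation seq :: "nat list \<Rightarrow> tableau" where
  "seq ks \<equiv> seq_app Y ks N T"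

lemma seq_n_inv:
  assumes "admissible Y T ks"
  shows "n_inv Y (seq ks) = sum_list ks"
proof -
  have "length ks = N" using assms by (simp add: admissible_iff)
  then show ?thesis using seq_app_F[OF assms order_refl] by (simp add: sum_list_sum_nth atLeast0LessThan)
qed

lemma seq_well_defined: "admissible Y T ks \<Longrightarrow> well_defined Y ks T"
  unfolding well_defined_def using seq_app_F[OF _ order_refl] by blast

lemma seq_bij: "bij_betw seq {ks. admissible Y T ks} {\<tau>. row_standard Y \<tau> \<and> st Y \<tau> = T}"
proof (rule bij_betw_imageI)
  show "inj_on seq {ks. admissible Y T ks}"
  proof (rule inj_onI)
    fix ks ks' assume "ks \<in> {ks. admissible Y T ks}" "ks' \<in> {ks. admissible Y T ks}" "seq ks = seq ks'"
    then have "admissible Y T ks" "admissible Y T ks'" "\<forall>i<N. ks ! i = ks' ! i"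
      using seq_app_inj[of ks ks' N] by simp_all
    then show "ks = ks'" by (intro nth_equalityI) (simp_all add: admissible_iff)
  qed
  show "seq ` {ks. admissible Y T ks} = {\<tau>. row_standard Y \<tau> \<and> st Y \<tau> = T}"
  proof
    show "seq ` {ks. admissible Y T ks} \<subseteq> {\<tau>. row_standard Y \<tau> \<and> st Y \<tau> = T}"
    proof (rule image_subsetI)
      fix ks assume "ks \<in> {ks. admissible Y T ks}"
      then show "seq ks \<in> {\<tau>. row_standard Y \<tau> \<and> st Y \<tau> = T}"
        using seq_app_F[of ks N] fibre_eq_F by simp
    qed
  next
    show "{\<tau>. row_standard Y \<tau> \<and> st Y \<tau> = T} \<subseteq> seq ` {ks. admissible Y T ks}"
    proof
      fix \<tau> assume "\<tau> \<in> {\<tau>. row_standard Y \<tau> \<and> st Y \<tau> = T}"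
      then have "\<tau> \<in> F N" using fibre_eq_F by simp
      then obtain ks where "admissible Y T ks" "seq ks = \<tau>" using seq_app_surj[of N] by blast
      then show "\<tau> \<in> seq ` {ks. admissible Y T ks}" by blast
    qed
  qed
qed

lemma seq_unique:
  assumes "row_standard Y \<tau> \<and> st Y \<tau> = T"
  shows "\<exists>!ks. admissible Y T ks \<and> \<tau> = seq ks"
proof -
  obtain ks where ks: "admissible Y T ks" "\<tau> = seq ks"
    using assms bij_betw_imp_surj_on[OF seq_bij] by blast
  have "ks' = ks" if "admissible Y T ks'" "\<tau> = seq ks'" for ks'
    using inj_onD[OF bij_betw_imp_inj_on[OF seq_bij], of ks' ks] that ks by simp
  then show ?thesis using ks by blast
qed

end


theorem proposition2p3:
  fixes Y :: "nat list" and T :: tableau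
  assumes "young Y" and "standard Y T"
  shows "(\<forall>ks. admissible Y T ks \<longrightarrow> well_defined Y ks T)
    \<and> (\<forall>\<tau>. row_standard Y \<tau> \<and> st Y \<tau> = T \<longrightarrow>
          (\<exists>!ks. admissible Y T ks \<and> \<tau> = seq_app Y ks (size_sh Y) T)
          \<and> (\<forall>ks. admissible Y T ks \<and> \<tau> = seq_app Y ks (size_sh Y) T \<longrightarrow>
                  n_inv Y \<tau> = sum_list ks))
    \<and> (\<forall>m. card {\<tau>. row_standard Y \<tau> \<and> st Y \<tau> = T \<and> n_inv Y \<tau> = m}
           = card {ks. admissible Y T ks \<and> sum_list ks = m})"
proof -
  interpret std_tab Y T using assms by unfold_locales
  have count: "card {\<tau>. row_standard Y \<tau> \<and> st Y \<tau> = T \<and> n_inv Y \<tau> = m}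
           = card {ks. admissible Y T ks \<and> sum_list ks = m}" for m
  proof -
    have "{ks. admissible Y T ks \<and> sum_list ks = m} = {ks \<in> {ks. admissible Y T ks}. n_inv Y (seq ks) = m}"
      using seq_n_inv by auto
    then show ?thesis
      using bij_betw_same_card[OF bij_betw_restrict_pred[OF seq_bij, of "\<lambda>\<tau>. n_inv Y \<tau> = m"]]
      by simp
  qed
  have fibre: "(\<exists>!ks. admissible Y T ks \<and> \<tau> = seq ks)
      \<and> (\<forall>ks. admissible Y T ks \<and> \<tau> = seq ks \<longrightarrow> n_inv Y \<tau> = sum_list ks)"
    if "row_standard Y \<tau> \<and> st Y \<tau> = T" for \<tau>
    using seq_unique[OF that] seq_n_inv by auto
  show ?thesis using seq_well_defined fibre count by blast
qed

end
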